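(* Let $p\in(-1,0)\cup(0,1)$, $\omega=e^{i\pi p}$, $f(x)=\frac{(x+\omega)(x-\omega^{-1})}{x^2-1}$, and $a\in\mathbb C$. The recurrent relations $$J_{N,a}(x_1,\ldots,x_{N-1},x)=2\cos\pi a\cdot J_{N-1,a}(x_1,\ldots,x_{N-1})+\sum_{i=1}^{N-1}\frac{x_i\,R_{N,a,i}(x_1,\ldots,x_{N-1})}{x+x_i},$$ where, with $X=(x_1,\ldots,x_{N-1})$ and $\hat X_i$ denoting $X$ with $x_i$ removed, $$R_{N,a,i}(X)=-i\sin\pi p\left(\prod_{j\ne i}f\!\left(\frac{x_i}{x_j}\right)-\prod_{j\ne i}f\!\left(\frac{x_j}{x_i}\right)\right)J_{N-2,a}(\hat X_i)$$ (products over $j\in\{1,\ldots,N-1\}\setminus\{i\}$), together with the initial conditions $$J_{0,a}=1,\qquad J_{1,a}(x)=2\cos\pi a,$$ define uniquely a sequence of homogeneous symmetric functions $J_{N,a}$ of $N$ variables of total degree $0$, $N=0,1,2,\ldots$; and these functions coincide with $$J_{N,a}(x_1,\ldots,x_N)=\sum_{I_+\sqcup I_-=\{1,\ldots,N\}}e^{i\pi a(\#I_--\#I_+)}\prod_{i\in I_-,\,j\in I_+}f\!\left(\frac{x_i}{x_j}\right).$$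
   Context: The sum is over ordered decompositions of $\{1,\ldots,N\}$ into two disjoint subsets $I_+,I_-$. These functions determine the breather form factors of the exponential fields in the sine/sinh-Gordon model. *)

theory Defs
  imports Complex_Main "HOL-Library.Multiset"
begin

text \<open>Indices are 0-based: a point (x_1,...,x_N) is a list of length N.\<close>

definition omega :: "real \<Rightarrow> complex" where
  "omega p = exp (\<i> * of_real (pi * p))"

definition ff :: "real \<Rightarrow> complex \<Rightarrow> complex" where
  "ff p x = (x + omega p) * (x - inverse (omega p)) / (x\<^sup>2 - 1)"

text \<open>Generic points: nonzero coordinates, x_i \<noteq> \<plusminus>x_j for i \<noteq> j
  (the points where all f(x_i/x_j) and all 1/(x+x_i) are defined).\<close>
definition generic :: "complex list \<Rightarrow> bool" where
  "generic xs \<longleftrightarrow> (\<forall>i<length xs. xs ! i \<noteq> 0 \<and>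
      (\<forall>j<length xs. i \<noteq> j \<longrightarrow> xs ! i \<noteq> xs ! j \<and> xs ! i \<noteq> - (xs ! j)))"

definition remove_at :: "nat \<Rightarrow> 'a list \<Rightarrow> 'a list" where
  "remove_at i xs = take i xs @ drop (Suc i) xs"

definition RR :: "real \<Rightarrow> (complex list \<Rightarrow> complex) \<Rightarrow> complex list \<Rightarrow> nat \<Rightarrow> complex" where
  "RR p J xs i = - \<i> * of_real (sin (pi * p)) *
     ((\<Prod>j\<in>{0..<length xs} - {i}. ff p (xs ! i / xs ! j))
      - (\<Prod>j\<in>{0..<length xs} - {i}. ff p (xs ! j / xs ! i)))
     * J (remove_at i xs)"

text \<open>The recurrence and initial conditions for a sequence J (J restricted to lists
  of length N is J_{N,a}).\<close>
definition satisfies_rec :: "real \<Rightarrow> complex \<Rightarrow> (complex list \<Rightarrow> complex) \<Rightarrow> bool" where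
  "satisfies_rec p a J \<longleftrightarrow>
     J [] = 1 \<and>
     (\<forall>x. J [x] = 2 * cos (of_real pi * a)) \<and>
     (\<forall>xs x. length xs \<ge> 1 \<longrightarrow> generic (xs @ [x]) \<longrightarrow>
        J (xs @ [x]) = 2 * cos (of_real pi * a) * J xs
          + (\<Sum>i<length xs. xs ! i * RR p J xs i / (x + xs ! i)))"

text \<open>Explicit formula: I_- = Im, I_+ = complement of Im in {0..<N}.\<close>
definition Jsum :: "real \<Rightarrow> complex \<Rightarrow> complex list \<Rightarrow> complex" where
  "Jsum p a xs = (\<Sum>Im\<in>Pow {0..<length xs}.
      exp (\<i> * of_real pi * a * (of_nat (card Im) - of_nat (card ({0..<length xs} - Im))))
      * (\<Prod>i\<in>Im. \<Prod>j\<in>{0..<length xs} - Im. ff p (xs ! i / xs ! j)))"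

end

theory Submission
  imports Defs "HOL-Complex_Analysis.Complex_Analysis" "HOL-Combinatorics.Permutations"
begin

(*
  Fix x_1, ..., x_(N-1) and regard J_N(x_1, ..., x_(N-1), z) as a rational function of z.
  Splitting the sum over I_- and I_+ according to whether z lies in I_- or in I_+, it tends to
  (e^(i pi a) + e^(-i pi a)) J_(N-1) = 2 cos(pi a) J_(N-1) as z -> oo, and its only singularities
  are simple poles at z = +-x_i. The partition with z in I_-, i in I_+ is paired with the one having
  z in I_+, i in I_- and the same other indices: both carry the same phase and opposite residues.
  At z = x_i the pairs cancel, while at z = -x_i the symmetry f(-t) = f(1/t) makes them add up to
  x_i R_(N,a,i). By Liouville's theorem J_N minus the right-hand side of the recurrence vanishes.
*)

lemma Liouville_removable_poles_0:
  fixes G :: "complex \<Rightarrow> complex"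
  assumes "finite T" "G holomorphic_on - T"
    and "\<And>t. t \<in> T \<Longrightarrow> ((\<lambda>z. (z - t) * G z) \<longlongrightarrow> 0) (at t)"
    and "(G \<longlongrightarrow> 0) at_infinity" "z \<notin> T"
  shows "G z = 0"
  using assms
proof (induction T arbitrary: G rule: finite_induct)
  case empty
  then show ?case using Liouville_weak_0[of G] by simp
next
  case (insert t T)
  have "open (- T)"
    using insert.hyps(1) by (simp add: finite_imp_closed open_Compl)
  then have "t \<in> interior (- T)"
    using insert.hyps(2) by (simp add: interior_open)
  moreover have "G holomorphic_on - T - {t}"
    using insert.prems(1) by (simp only: Compl_insert)
  ultimately obtain g where g: "g holomorphic_on - T" "\<And>z. z \<in> - T - {t} \<Longrightarrow> g z = G z"
    using holomorphic_on_extend_lim insert.prems(2) by blast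
  have G_eq_g: "eventually (\<lambda>z. G z = g z) F" if "\<And>s. eventually (\<lambda>z. z \<noteq> s) F" for F
  proof -
    have "eventually (\<lambda>z. \<forall>s\<in>insert t T. z \<noteq> s) F"
      using insert.hyps(1) that by (intro eventually_ball_finite) auto
    then show ?thesis
      by (rule eventually_mono) (auto simp: g(2))
  qed
  have "g z = 0"
  proof (rule insert.IH[OF g(1)])
    fix s assume "s \<in> T"
    have "eventually (\<lambda>z. (z - s) * G z = (z - s) * g z) (at s)"
      using G_eq_g[OF eventually_neq_at_within] by (rule eventually_mono) simp
    with insert.prems(2)[OF insertI2[OF \<open>s \<in> T\<close>]]
    show "((\<lambda>z. (z - s) * g z) \<longlongrightarrow> 0) (at s)"
      by (rule Lim_transform_eventually)
  next
    show "(g \<longlongrightarrow> 0) at_infinity"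
      using insert.prems(3) G_eq_g[OF eventually_not_equal_at_infinity]
      by (rule Lim_transform_eventually)
  qed (use insert.prems in auto)
  then show ?case using g(2)[of z] insert.prems by auto
qed

lemma tendsto_mult_simple_pole:
  fixes N :: "complex \<Rightarrow> complex"
  assumes "s\<^sup>2 = c\<^sup>2" "s \<noteq> 0" "isCont N s"
  shows "((\<lambda>z. (z - s) * (N z / (z\<^sup>2 - c\<^sup>2))) \<longlongrightarrow> N s / (2 * s)) (at s)"
  unfolding mult_2
proof (rule Lim_transform_eventually)
  show "((\<lambda>z. N z / (z + s)) \<longlongrightarrow> N s / (s + s)) (at s)"
    using assms(2,3) by (intro tendsto_intros) (auto simp: isCont_def)
  show "eventually (\<lambda>z. N z / (z + s) = (z - s) * (N z / (z\<^sup>2 - c\<^sup>2))) (at s)"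
  proof (rule eventually_mono[OF eventually_neq_at_within])
    fix z assume "z \<noteq> s"
    then have "z - s \<noteq> 0" by simp
    moreover have "z\<^sup>2 - c\<^sup>2 = (z - s) * (z + s)"
      using assms(1) by (simp add: algebra_simps power2_eq_square)
    ultimately show "N z / (z + s) = (z - s) * (N z / (z\<^sup>2 - c\<^sup>2))"
      by (simp add: nonzero_mult_divide_mult_cancel_left)
  qed
qed

lemma omega_nonzero [simp]: "omega p \<noteq> 0"
  by (simp add: omega_def)

lemma omega_minus_inverse: "omega p - inverse (omega p) = 2 * \<i> * of_real (sin (pi * p))"
proof -
  have "omega p = cis (pi * p)" by (simp add: omega_def cis_conv_exp)
  then show ?thesis by (simp add: complex_eq_iff)
qed

definition fhom :: "real \<Rightarrow> complex \<Rightarrow> complex \<Rightarrow> complex" where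
  "fhom p u v = (u + omega p * v) * (u - inverse (omega p) * v) / (u\<^sup>2 - v\<^sup>2)"

lemma ff_divide_eq_fhom:
  assumes "v \<noteq> 0"
  shows "ff p (u / v) = fhom p u v"
proof -
  have N: "(u / v + omega p) * (u / v - inverse (omega p))
      = (u + omega p * v) * (u - inverse (omega p) * v) / v\<^sup>2"
    using assms by (simp add: field_simps power2_eq_square)
  have D: "(u / v)\<^sup>2 - 1 = (u\<^sup>2 - v\<^sup>2) / v\<^sup>2"
    using assms by (simp add: field_simps power2_eq_square)
  show ?thesis
    unfolding ff_def fhom_def N D using assms by simp
qed

lemma fhom_minus_left: "fhom p (- u) v = fhom p v u"
proof -
  have "(- u + omega p * v) * (- u - inverse (omega p) * v)
      = - ((v + omega p * u) * (v - inverse (omega p) * u))"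
    by (simp add: field_simps; simp add: algebra_simps)
  moreover have "(- u)\<^sup>2 - v\<^sup>2 = - (v\<^sup>2 - u\<^sup>2)" by simp
  ultimately show ?thesis
    unfolding fhom_def by (simp only: minus_divide_divide)
qed

lemma fhom_minus_minus: "fhom p (- u) (- v) = fhom p u v"
proof -
  have "(- u + omega p * - v) * (- u - inverse (omega p) * - v)
      = (u + omega p * v) * (u - inverse (omega p) * v)"
    by (simp add: algebra_simps)
  then show ?thesis
    unfolding fhom_def by simp
qed

lemma fhom_minus_right: "fhom p u (- v) = fhom p v u"
  using fhom_minus_minus[of p "- u" v] fhom_minus_left[of p u v] by simp

lemma fhom_numerator_eq:
  assumes "u\<^sup>2 = v\<^sup>2"
  shows "(u + omega p * v) * (u - inverse (omega p) * v) = 2 * \<i> * of_real (sin (pi * p)) * u * v"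
proof -
  have "(u + omega p * v) * (u - inverse (omega p) * v)
      = (omega p - inverse (omega p)) * u * v + (u\<^sup>2 - v\<^sup>2)"
    by (simp add: algebra_simps power2_eq_square)
  then show ?thesis
    using assms by (simp add: omega_minus_inverse)
qed

lemma fhom_residue_left:
  assumes "s\<^sup>2 = c\<^sup>2" "s \<noteq> 0"
  shows "((\<lambda>z. (z - s) * fhom p z c) \<longlongrightarrow> \<i> * of_real (sin (pi * p)) * c) (at s)"
proof -
  have "(s + omega p * c) * (s - inverse (omega p) * c) / (2 * s) = \<i> * of_real (sin (pi * p)) * c"
    unfolding fhom_numerator_eq[OF assms(1)] using assms(2) by simp
  with tendsto_mult_simple_pole[OF assms, of "\<lambda>z. (z + omega p * c) * (z - inverse (omega p) * c)"]
  show ?thesis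
    unfolding fhom_def by simp
qed

lemma fhom_residue_right:
  assumes "s\<^sup>2 = c\<^sup>2" "s \<noteq> 0"
  shows "((\<lambda>z. (z - s) * fhom p c z) \<longlongrightarrow> - (\<i> * of_real (sin (pi * p)) * c)) (at s)"
proof -
  have "fhom p c z = - ((c + omega p * z) * (c - inverse (omega p) * z)) / (z\<^sup>2 - c\<^sup>2)" for z
  proof -
    have "c\<^sup>2 - z\<^sup>2 = - (z\<^sup>2 - c\<^sup>2)" by simp
    then show ?thesis
      unfolding fhom_def by (simp only: divide_minus_right minus_divide_left)
  qed
  moreover have "- ((c + omega p * s) * (c - inverse (omega p) * s)) / (2 * s)
      = - (\<i> * of_real (sin (pi * p)) * c)"
    unfolding fhom_numerator_eq[OF assms(1)[symmetric]] using assms(2) by simp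
  ultimately show ?thesis
    using tendsto_mult_simple_pole[OF assms, of "\<lambda>z. - ((c + omega p * z) * (c - inverse (omega p) * z))"]
    by simp
qed

lemma isCont_fhom_left: "t\<^sup>2 \<noteq> c\<^sup>2 \<Longrightarrow> isCont (\<lambda>z. fhom p z c) t"
  unfolding fhom_def by (intro continuous_intros) simp

lemma isCont_fhom_right: "t\<^sup>2 \<noteq> c\<^sup>2 \<Longrightarrow> isCont (\<lambda>z. fhom p c z) t"
  unfolding fhom_def by (intro continuous_intros) simp

lemma holomorphic_on_fhom_left [holomorphic_intros]:
  "(\<And>z. z \<in> S \<Longrightarrow> z\<^sup>2 \<noteq> c\<^sup>2) \<Longrightarrow> (\<lambda>z. fhom p z c) holomorphic_on S"
  unfolding fhom_def by (intro holomorphic_intros) simp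

lemma holomorphic_on_fhom_right [holomorphic_intros]:
  "(\<And>z. z \<in> S \<Longrightarrow> z\<^sup>2 \<noteq> c\<^sup>2) \<Longrightarrow> (\<lambda>z. fhom p c z) holomorphic_on S"
  unfolding fhom_def by (intro holomorphic_intros) (metis right_minus_eq)

lemma fhom_left_tendsto_at_infinity: "((\<lambda>z. fhom p z c) \<longlongrightarrow> 1) at_infinity"
proof (rule Lim_transform_eventually)
  define g where "g w = (1 + omega p * w) * (1 - inverse (omega p) * w) / (1 - w\<^sup>2)" for w
  have "isCont g 0"
    unfolding g_def by (intro continuous_intros) simp
  then have "((\<lambda>z. g (c / z)) \<longlongrightarrow> g 0) at_infinity"
    by (rule isCont_tendsto_compose) (intro tendsto_divide_0[OF tendsto_const] filterlim_ident)
  then show "((\<lambda>z. g (c / z)) \<longlongrightarrow> 1) at_infinity"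
    by (simp add: g_def)
  show "eventually (\<lambda>z. g (c / z) = fhom p z c) at_infinity"
  proof (rule eventually_mono[OF eventually_not_equal_at_infinity[of 0]])
    fix z :: complex assume z: "z \<noteq> 0"
    have N: "(1 + omega p * (c / z)) * (1 - inverse (omega p) * (c / z))
        = (z + omega p * c) * (z - inverse (omega p) * c) / z\<^sup>2"
      using z by (simp add: field_simps power2_eq_square)
    have D: "1 - (c / z)\<^sup>2 = (z\<^sup>2 - c\<^sup>2) / z\<^sup>2"
      using z by (simp add: field_simps power2_eq_square)
    show "g (c / z) = fhom p z c"
      unfolding g_def fhom_def N D using z by simp
  qed
qed

lemma fhom_right_tendsto_at_infinity: "((\<lambda>z. fhom p c z) \<longlongrightarrow> 1) at_infinity"
proof (rule Lim_transform_eventually)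
  have "isCont (ff p) 0"
    unfolding ff_def by (intro continuous_intros) simp
  then have "((\<lambda>z. ff p (c / z)) \<longlongrightarrow> ff p 0) at_infinity"
    by (rule isCont_tendsto_compose) (intro tendsto_divide_0[OF tendsto_const] filterlim_ident)
  then show "((\<lambda>z. ff p (c / z)) \<longlongrightarrow> 1) at_infinity"
    by (simp add: ff_def)
  show "eventually (\<lambda>z. ff p (c / z) = fhom p c z) at_infinity"
    by (rule eventually_mono[OF eventually_not_equal_at_infinity[of 0]]) (rule ff_divide_eq_fhom)
qed

definition phase :: "complex \<Rightarrow> nat \<Rightarrow> nat \<Rightarrow> complex" where
  "phase a m k = exp (\<i> * of_real pi * a * (of_nat m - of_nat k))"

type_synonym kernel = "complex \<Rightarrow> complex \<Rightarrow> complex"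

definition cross_prod :: "kernel \<Rightarrow> (nat \<Rightarrow> complex) \<Rightarrow> nat set \<Rightarrow> nat set \<Rightarrow> complex" where
  "cross_prod \<phi> x I M = (\<Prod>i\<in>M. \<Prod>j\<in>I - M. \<phi> (x i) (x j))"

definition J_on :: "kernel \<Rightarrow> complex \<Rightarrow> (nat \<Rightarrow> complex) \<Rightarrow> nat set \<Rightarrow> complex" where
  "J_on \<phi> a x I = (\<Sum>M\<in>Pow I. phase a (card M) (card (I - M)) * cross_prod \<phi> x I M)"

(* J_on of I with one more point z adjoined (see J_on_insert): the first sum collects the
   partitions with z in I_-, the second those with z in I_+. *)

definition J_ext :: "kernel \<Rightarrow> complex \<Rightarrow> (nat \<Rightarrow> complex) \<Rightarrow> nat set \<Rightarrow> complex \<Rightarrow> complex" where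
  "J_ext \<phi> a x I z =
     (\<Sum>M\<in>Pow I. phase a (Suc (card M)) (card (I - M)) * cross_prod \<phi> x I M * (\<Prod>k\<in>I - M. \<phi> z (x k)))
   + (\<Sum>M\<in>Pow I. phase a (card M) (Suc (card (I - M))) * cross_prod \<phi> x I M * (\<Prod>i\<in>M. \<phi> (x i) z))"

lemma phase_Suc_Suc [simp]: "phase a (Suc m) (Suc k) = phase a m k"
  unfolding phase_def by (simp add: algebra_simps)

lemma phase_Suc_add_phase_Suc:
  "phase a (Suc m) k + phase a m (Suc k) = 2 * cos (of_real pi * a) * phase a m k"
proof -
  have "phase a (Suc m) k = exp (\<i> * of_real pi * a) * phase a m k"
    "phase a m (Suc k) = exp (- (\<i> * of_real pi * a)) * phase a m k"
    unfolding phase_def exp_add[symmetric] by (simp_all add: algebra_simps)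
  then show ?thesis
    by (simp add: cos_exp_eq algebra_simps)
qed

lemma J_on_cong:
  assumes "\<And>i j. i \<in> I \<Longrightarrow> j \<in> I \<Longrightarrow> \<phi> (x i) (x j) = \<psi> (y i) (y j)"
  shows "J_on \<phi> a x I = J_on \<psi> a y I"
  unfolding J_on_def cross_prod_def using assms by (intro sum.cong refl arg_cong2[where f="(*)"] prod.cong) auto

lemma J_ext_cong:
  assumes "\<And>i. i \<in> I \<Longrightarrow> x i = y i"
  shows "J_ext \<phi> a x I z = J_ext \<phi> a y I z"
  unfolding J_ext_def cross_prod_def using assms
  by (intro arg_cong2[where f="(+)"] sum.cong refl arg_cong2[where f="(*)"] prod.cong) auto

lemma J_on_reindex:
  assumes "inj_on h I"
  shows "J_on \<phi> a (x \<circ> h) I = J_on \<phi> a x (h ` I)"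
proof -
  have "Pow (h ` I) = image h ` Pow I"
    by (auto simp: image_Pow_surj)
  moreover have "inj_on (image h) (Pow I)"
    using assms by (rule inj_on_image_Pow)
  moreover have "phase a (card (h ` M)) (card (h ` I - h ` M)) * cross_prod \<phi> x (h ` I) (h ` M)
      = phase a (card M) (card (I - M)) * cross_prod \<phi> (x \<circ> h) I M" if "M \<subseteq> I" for M
  proof -
    have "inj_on h M" "inj_on h (I - M)" "h ` I - h ` M = h ` (I - M)"
      using assms that by (auto intro: inj_on_subset simp: inj_on_image_set_diff)
    then show ?thesis
      unfolding cross_prod_def by (simp add: card_image prod.reindex)
  qed
  ultimately show ?thesis
    unfolding J_on_def by (simp add: sum.reindex)
qed

lemma sum_Pow_insert:
  assumes "finite I" "j \<notin> I"
  shows "(\<Sum>M\<in>Pow (insert j I). g M) = (\<Sum>M\<in>Pow I. g M + g (insert j M))"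
proof -
  have "inj_on (insert j) (Pow I)"
    using assms(2) by (intro inj_onI) (metis PowD insert_ident subsetD)
  moreover have "Pow I \<inter> insert j ` Pow I = {}"
    using assms(2) by auto
  ultimately show ?thesis
    using assms(1) by (simp add: Pow_insert sum.union_disjoint sum.reindex sum.distrib)
qed

lemma cross_prod_insert_outside:
  assumes "finite I" "j \<notin> I" "M \<subseteq> I"
  shows "cross_prod \<phi> x (insert j I) M = cross_prod \<phi> x I M * (\<Prod>i\<in>M. \<phi> (x i) (x j))"
proof -
  have "insert j I - M = insert j (I - M)"
    using assms by auto
  then show ?thesis
    unfolding cross_prod_def using assms by (simp add: prod.distrib mult.commute)
qed

lemma cross_prod_insert_inside:
  assumes "finite I" "j \<notin> I" "M \<subseteq> I"
  shows "cross_prod \<phi> x (insert j I) (insert j M) = cross_prod \<phi> x I M * (\<Prod>k\<in>I - M. \<phi> (x j) (x k))"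
proof -
  have "insert j I - insert j M = I - M" "finite M" "j \<notin> M"
    using assms finite_subset by auto
  then show ?thesis
    unfolding cross_prod_def by (simp add: mult.commute)
qed

lemma J_on_insert:
  assumes "finite I" "j \<notin> I"
  shows "J_on \<phi> a x (insert j I) = J_ext \<phi> a x I (x j)"
proof -
  have sets: "insert j I - M = insert j (I - M)" "insert j I - insert j M = I - M" "j \<notin> M" "finite M"
    if "M \<subseteq> I" for M
    using assms that finite_subset by auto
  have "phase a (card M) (card (insert j I - M)) * cross_prod \<phi> x (insert j I) M
      = phase a (card M) (Suc (card (I - M))) * cross_prod \<phi> x I M * (\<Prod>i\<in>M. \<phi> (x i) (x j))"
    "phase a (card (insert j M)) (card (insert j I - insert j M)) * cross_prod \<phi> x (insert j I) (insert j M)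
      = phase a (Suc (card M)) (card (I - M)) * cross_prod \<phi> x I M * (\<Prod>k\<in>I - M. \<phi> (x j) (x k))"
    if "M \<subseteq> I" for M
    using assms that sets[OF that]
    by (simp_all add: cross_prod_insert_outside cross_prod_insert_inside mult.assoc)
  then show ?thesis
    unfolding J_on_def J_ext_def sum_Pow_insert[OF assms] by (simp add: sum.distrib add.commute)
qed

lemma J_ext_tendsto:
  assumes "finite I"
    and "\<And>k. k \<in> I \<Longrightarrow> ((\<lambda>z. \<phi> z (x k)) \<longlongrightarrow> 1) F"
    and "\<And>k. k \<in> I \<Longrightarrow> ((\<lambda>z. \<phi> (x k) z) \<longlongrightarrow> 1) F"
  shows "(J_ext \<phi> a x I \<longlongrightarrow> 2 * cos (of_real pi * a) * J_on \<phi> a x I) F"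
proof -
  have "(J_ext \<phi> a x I \<longlongrightarrow>
      (\<Sum>M\<in>Pow I. phase a (Suc (card M)) (card (I - M)) * cross_prod \<phi> x I M * (\<Prod>k\<in>I - M. 1))
    + (\<Sum>M\<in>Pow I. phase a (card M) (Suc (card (I - M))) * cross_prod \<phi> x I M * (\<Prod>i\<in>M. 1))) F"
    unfolding J_ext_def[abs_def] using assms by (intro tendsto_intros) auto
  then show ?thesis
    by (simp add: J_on_def sum_distrib_left sum.distrib[symmetric] distrib_right[symmetric]
        phase_Suc_add_phase_Suc mult.assoc)
qed

(* Only the first sum has poles at z = +-x j, coming from its factors \<phi> z (x j) and \<phi> (x j) z. *)

lemma J_ext_insert_split:
  assumes "finite I" "j \<notin> I"
  shows "J_ext \<phi> a x (insert j I) z =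
    (\<Sum>M\<in>Pow I. phase a (card M) (card (I - M)) * cross_prod \<phi> x I M *
       (\<phi> z (x j) * ((\<Prod>i\<in>M. \<phi> (x i) (x j)) * (\<Prod>k\<in>I - M. \<phi> z (x k)))
      + \<phi> (x j) z * ((\<Prod>k\<in>I - M. \<phi> (x j) (x k)) * (\<Prod>i\<in>M. \<phi> (x i) z))))
  + ((\<Sum>M\<in>Pow I. phase a (Suc (Suc (card M))) (card (I - M)) * cross_prod \<phi> x I M *
       ((\<Prod>k\<in>I - M. \<phi> (x j) (x k)) * (\<Prod>k\<in>I - M. \<phi> z (x k))))
  + (\<Sum>M\<in>Pow I. phase a (card M) (Suc (Suc (card (I - M)))) * cross_prod \<phi> x I M *
       ((\<Prod>i\<in>M. \<phi> (x i) (x j)) * (\<Prod>i\<in>M. \<phi> (x i) z))))"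
proof -
  let ?J = "insert j I"
  have sets: "insert j I - M = insert j (I - M)" "insert j I - insert j M = I - M" "j \<notin> M" "finite M"
    if "M \<in> Pow I" for M
    using assms that finite_subset by auto
  have terms:
    "phase a (Suc (card M)) (card (?J - M)) * cross_prod \<phi> x ?J M * (\<Prod>k\<in>?J - M. \<phi> z (x k))
      = phase a (card M) (card (I - M)) * cross_prod \<phi> x I M
        * (\<phi> z (x j) * ((\<Prod>i\<in>M. \<phi> (x i) (x j)) * (\<Prod>k\<in>I - M. \<phi> z (x k))))"
    "phase a (Suc (card (insert j M))) (card (?J - insert j M)) * cross_prod \<phi> x ?J (insert j M)
        * (\<Prod>k\<in>?J - insert j M. \<phi> z (x k))
      = phase a (Suc (Suc (card M))) (card (I - M)) * cross_prod \<phi> x I M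
        * ((\<Prod>k\<in>I - M. \<phi> (x j) (x k)) * (\<Prod>k\<in>I - M. \<phi> z (x k)))"
    "phase a (card M) (Suc (card (?J - M))) * cross_prod \<phi> x ?J M * (\<Prod>i\<in>M. \<phi> (x i) z)
      = phase a (card M) (Suc (Suc (card (I - M)))) * cross_prod \<phi> x I M
        * ((\<Prod>i\<in>M. \<phi> (x i) (x j)) * (\<Prod>i\<in>M. \<phi> (x i) z))"
    "phase a (card (insert j M)) (Suc (card (?J - insert j M))) * cross_prod \<phi> x ?J (insert j M)
        * (\<Prod>i\<in>insert j M. \<phi> (x i) z)
      = phase a (card M) (card (I - M)) * cross_prod \<phi> x I M
        * (\<phi> (x j) z * ((\<Prod>k\<in>I - M. \<phi> (x j) (x k)) * (\<Prod>i\<in>M. \<phi> (x i) z)))"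
    if "M \<in> Pow I" for M
    using assms that sets[OF that]
    by (simp_all add: cross_prod_insert_outside cross_prod_insert_inside ac_simps)
  show ?thesis
    unfolding J_ext_def sum_Pow_insert[OF assms]
    by (simp only: terms cong: sum.cong) (simp only: sum.distrib distrib_left add_ac)
qed

lemma tendsto_mult_J_ext_insert:
  assumes "finite I" "j \<notin> I"
    and "((\<lambda>z. (z - t) * \<phi> z (x j)) \<longlongrightarrow> r) (at t)"
    and "((\<lambda>z. (z - t) * \<phi> (x j) z) \<longlongrightarrow> - r) (at t)"
    and "\<And>k. k \<in> I \<Longrightarrow> isCont (\<lambda>z. \<phi> z (x k)) t"
    and "\<And>k. k \<in> I \<Longrightarrow> isCont (\<lambda>z. \<phi> (x k) z) t"
  shows "((\<lambda>z. (z - t) * J_ext \<phi> a x (insert j I) z) \<longlongrightarrow>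
    r * (\<Sum>M\<in>Pow I. phase a (card M) (card (I - M)) * cross_prod \<phi> x I M *
      ((\<Prod>i\<in>M. \<phi> (x i) (x j)) * (\<Prod>k\<in>I - M. \<phi> t (x k))
     - (\<Prod>k\<in>I - M. \<phi> (x j) (x k)) * (\<Prod>i\<in>M. \<phi> (x i) t)))) (at t)"
proof -
  define w where "w M = phase a (card M) (card (I - M)) * cross_prod \<phi> x I M" for M
  define A where "A M z = (\<Prod>i\<in>M. \<phi> (x i) (x j)) * (\<Prod>k\<in>I - M. \<phi> z (x k))" for M z
  define B where "B M z = (\<Prod>k\<in>I - M. \<phi> (x j) (x k)) * (\<Prod>i\<in>M. \<phi> (x i) z)" for M z
  define R where "R z =
    (\<Sum>M\<in>Pow I. phase a (Suc (Suc (card M))) (card (I - M)) * cross_prod \<phi> x I M *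
       ((\<Prod>k\<in>I - M. \<phi> (x j) (x k)) * (\<Prod>k\<in>I - M. \<phi> z (x k))))
  + (\<Sum>M\<in>Pow I. phase a (card M) (Suc (Suc (card (I - M)))) * cross_prod \<phi> x I M *
       ((\<Prod>i\<in>M. \<phi> (x i) (x j)) * (\<Prod>i\<in>M. \<phi> (x i) z)))" for z
  have split: "(z - t) * J_ext \<phi> a x (insert j I) z =
      (\<Sum>M\<in>Pow I. w M * (((z - t) * \<phi> z (x j)) * A M z + ((z - t) * \<phi> (x j) z) * B M z))
    + (z - t) * R z" for z
    unfolding J_ext_insert_split[OF assms(1,2)] w_def A_def B_def R_def
    by (simp add: sum_distrib_left algebra_simps)
  have cont: "((\<lambda>z. \<phi> z (x k)) \<longlongrightarrow> \<phi> t (x k)) (at t)"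
    "((\<lambda>z. \<phi> (x k) z) \<longlongrightarrow> \<phi> (x k) t) (at t)"
    if "k \<in> I" for k
    using assms(5,6)[OF that] by (simp_all add: isCont_def)
  have "((\<lambda>z. (\<Sum>M\<in>Pow I. w M * (((z - t) * \<phi> z (x j)) * A M z + ((z - t) * \<phi> (x j) z) * B M z))
    + (z - t) * R z) \<longlongrightarrow> (\<Sum>M\<in>Pow I. w M * (r * A M t + (- r) * B M t)) + (t - t) * R t) (at t)"
    unfolding A_def B_def R_def using assms(3,4) cont
    by (intro tendsto_intros) auto
  then show ?thesis
    unfolding split by (simp add: w_def A_def B_def sum_distrib_left algebra_simps)
qed

definition generic_on :: "(nat \<Rightarrow> complex) \<Rightarrow> nat set \<Rightarrow> bool" where
  "generic_on x I \<longleftrightarrow> (\<forall>i\<in>I. x i \<noteq> 0 \<and> (\<forall>j\<in>I. i \<noteq> j \<longrightarrow> (x i)\<^sup>2 \<noteq> (x j)\<^sup>2))"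

definition pole_coeff :: "real \<Rightarrow> complex \<Rightarrow> (nat \<Rightarrow> complex) \<Rightarrow> nat set \<Rightarrow> nat \<Rightarrow> complex" where
  "pole_coeff p a x I i = x i * (- \<i> * of_real (sin (pi * p)) *
     ((\<Prod>j\<in>I - {i}. fhom p (x i) (x j)) - (\<Prod>j\<in>I - {i}. fhom p (x j) (x i)))
     * J_on (fhom p) a x (I - {i}))"

lemma tendsto_J_ext_removable_at:
  assumes "finite I" "j \<notin> I" "generic_on x (insert j I)"
  shows "((\<lambda>z. (z - x j) * J_ext (fhom p) a x (insert j I) z) \<longlongrightarrow> 0) (at (x j))"
proof -
  have "x j \<noteq> 0" "\<And>k. k \<in> I \<Longrightarrow> (x j)\<^sup>2 \<noteq> (x k)\<^sup>2"
    using assms(2,3) unfolding generic_on_def by auto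
  then have "((\<lambda>z. (z - x j) * J_ext (fhom p) a x (insert j I) z) \<longlongrightarrow>
    \<i> * of_real (sin (pi * p)) * x j * (\<Sum>M\<in>Pow I. phase a (card M) (card (I - M)) * cross_prod (fhom p) x I M *
      ((\<Prod>i\<in>M. fhom p (x i) (x j)) * (\<Prod>k\<in>I - M. fhom p (x j) (x k))
     - (\<Prod>k\<in>I - M. fhom p (x j) (x k)) * (\<Prod>i\<in>M. fhom p (x i) (x j))))) (at (x j))"
    using assms(1,2)
    by (intro tendsto_mult_J_ext_insert fhom_residue_left fhom_residue_right isCont_fhom_left
        isCont_fhom_right) auto
  then show ?thesis
    by (simp add: mult.commute)
qed

lemma tendsto_J_ext_residue_at_uminus:
  assumes "finite I" "j \<notin> I" "generic_on x (insert j I)"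
  shows "((\<lambda>z. (z - - x j) * J_ext (fhom p) a x (insert j I) z) \<longlongrightarrow> pole_coeff p a x (insert j I) j)
    (at (- x j))"
proof -
  define w where "w M = phase a (card M) (card (I - M)) * cross_prod (fhom p) x I M" for M
  have "x j \<noteq> 0" "\<And>k. k \<in> I \<Longrightarrow> (x j)\<^sup>2 \<noteq> (x k)\<^sup>2"
    using assms(2,3) unfolding generic_on_def by auto
  then have lim: "((\<lambda>z. (z - - x j) * J_ext (fhom p) a x (insert j I) z) \<longlongrightarrow>
    \<i> * of_real (sin (pi * p)) * x j * (\<Sum>M\<in>Pow I. w M *
      ((\<Prod>i\<in>M. fhom p (x i) (x j)) * (\<Prod>k\<in>I - M. fhom p (- x j) (x k))
     - (\<Prod>k\<in>I - M. fhom p (x j) (x k)) * (\<Prod>i\<in>M. fhom p (x i) (- x j))))) (at (- x j))"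
    unfolding w_def using assms(1,2)
    by (intro tendsto_mult_J_ext_insert fhom_residue_left fhom_residue_right isCont_fhom_left
        isCont_fhom_right) auto
  have bracket: "(\<Prod>i\<in>M. fhom p (x i) (x j)) * (\<Prod>k\<in>I - M. fhom p (- x j) (x k))
     - (\<Prod>k\<in>I - M. fhom p (x j) (x k)) * (\<Prod>i\<in>M. fhom p (x i) (- x j))
     = (\<Prod>k\<in>I. fhom p (x k) (x j)) - (\<Prod>k\<in>I. fhom p (x j) (x k))" if "M \<in> Pow I" for M
    using that assms(1)
    by (simp add: fhom_minus_left fhom_minus_right prod.subset_diff[of M I] mult.commute)
  have sum_bracket: "(\<Sum>M\<in>Pow I. w M *
      ((\<Prod>i\<in>M. fhom p (x i) (x j)) * (\<Prod>k\<in>I - M. fhom p (- x j) (x k))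
     - (\<Prod>k\<in>I - M. fhom p (x j) (x k)) * (\<Prod>i\<in>M. fhom p (x i) (- x j))))
    = (\<Sum>M\<in>Pow I. w M * ((\<Prod>k\<in>I. fhom p (x k) (x j)) - (\<Prod>k\<in>I. fhom p (x j) (x k))))"
    by (rule sum.cong[OF refl]) (simp only: bracket)
  have "insert j I - {j} = I"
    using assms(2) by auto
  then have "\<i> * of_real (sin (pi * p)) * x j * (\<Sum>M\<in>Pow I. w M *
      ((\<Prod>k\<in>I. fhom p (x k) (x j)) - (\<Prod>k\<in>I. fhom p (x j) (x k))))
    = pole_coeff p a x (insert j I) j"
    unfolding pole_coeff_def J_on_def w_def sum_distrib_right[symmetric] by (simp add: algebra_simps)
  with lim show ?thesis
    unfolding sum_bracket by simp
qed

lemma tendsto_sum_partial_fractions: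
  fixes c x :: "'a \<Rightarrow> complex"
  assumes "finite I"
  shows "((\<lambda>z. \<Sum>i\<in>I. c i * ((z - t) / (z + x i)))
    \<longlongrightarrow> (\<Sum>i\<in>I. if t = - x i then c i else 0)) (at t)"
proof -
  have "((\<lambda>z. (z - t) / (z + x i)) \<longlongrightarrow> (if t = - x i then 1 else 0)) (at t)" for i
  proof (cases "t = - x i")
    case True
    have "eventually (\<lambda>z. 1 = (z - t) / (z + x i)) (at t)"
      by (rule eventually_mono[OF eventually_neq_at_within[of t]]) (simp add: True add_eq_0_iff2)
    with True show ?thesis
      by (simp add: Lim_transform_eventually[OF tendsto_const])
  next
    case False
    then have "((\<lambda>z. (z - t) / (z + x i)) \<longlongrightarrow> (t - t) / (t + x i)) (at t)"
      by (intro tendsto_intros) (auto simp: add_eq_0_iff2)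
    with False show ?thesis
      by simp
  qed
  then have "((\<lambda>z. \<Sum>i\<in>I. c i * ((z - t) / (z + x i)))
      \<longlongrightarrow> (\<Sum>i\<in>I. c i * (if t = - x i then 1 else 0))) (at t)"
    by (intro tendsto_intros)
  then show ?thesis
    by (simp add: if_distrib[of "\<lambda>u. _ * u"] cong: if_cong)
qed

lemma tendsto_mult_J_ext_fhom:
  assumes "finite I" "generic_on x I" "j \<in> I" "t = x j \<or> t = - x j"
  shows "((\<lambda>z. (z - t) * J_ext (fhom p) a x I z)
    \<longlongrightarrow> (\<Sum>i\<in>I. if t = - x i then pole_coeff p a x I i else 0)) (at t)"
proof -
  have I_eq: "insert j (I - {j}) = I"
    using assms(3) by auto
  have gen: "generic_on x (insert j (I - {j}))"
    using assms(2) I_eq by simp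
  have "t \<noteq> - x i" if "i \<in> I" "i \<noteq> j" for i
    using assms(2-4) that unfolding generic_on_def by (metis power2_minus)
  then have "(\<Sum>i\<in>I. if t = - x i then pole_coeff p a x I i else 0)
      = (if t = - x j then pole_coeff p a x I j else 0)"
    using assms(1,3) by (simp add: sum.remove)
  moreover have "((\<lambda>z. (z - t) * J_ext (fhom p) a x I z)
      \<longlongrightarrow> (if t = - x j then pole_coeff p a x I j else 0)) (at t)"
  proof (cases "t = - x j")
    case True
    then show ?thesis
      using tendsto_J_ext_residue_at_uminus[OF _ _ gen, of p a] assms(1) unfolding I_eq by simp
  next
    case False
    then show ?thesis
      using tendsto_J_ext_removable_at[OF _ _ gen, of p a] assms(1,4) unfolding I_eq by simp
  qed
  ultimately show ?thesis
    by simp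
qed

lemma J_ext_partial_fractions:
  assumes "finite I" "generic_on x I" "\<And>i. i \<in> I \<Longrightarrow> z\<^sup>2 \<noteq> (x i)\<^sup>2"
  shows "J_ext (fhom p) a x I z
    = 2 * cos (of_real pi * a) * J_on (fhom p) a x I + (\<Sum>i\<in>I. pole_coeff p a x I i / (z + x i))"
proof -
  define E where "E = 2 * cos (of_real pi * a) * J_on (fhom p) a x I"
  define G where "G z = J_ext (fhom p) a x I z - (E + (\<Sum>i\<in>I. pole_coeff p a x I i / (z + x i)))" for z
  define T where "T = x ` I \<union> (\<lambda>i. - x i) ` I"
  have off_T: "z\<^sup>2 \<noteq> (x i)\<^sup>2" "z + x i \<noteq> 0" if "z \<notin> T" "i \<in> I" for z i
    using that by (auto simp: T_def power2_eq_iff add_eq_0_iff2)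
  have "G holomorphic_on - T"
    unfolding G_def J_ext_def by (intro holomorphic_intros) (auto dest: off_T)
  moreover have "(G \<longlongrightarrow> 0) at_infinity"
  proof -
    have "(G \<longlongrightarrow> E - (E + (\<Sum>i\<in>I. 0))) at_infinity"
      unfolding G_def[abs_def] E_def using assms(1)
      by (intro tendsto_intros J_ext_tendsto fhom_left_tendsto_at_infinity fhom_right_tendsto_at_infinity
          tendsto_divide_0[OF tendsto_const] tendsto_add_filterlim_at_infinity'[OF filterlim_ident tendsto_const])
    then show ?thesis by simp
  qed
  moreover have "((\<lambda>z. (z - t) * G z) \<longlongrightarrow> 0) (at t)" if "t \<in> T" for t
  proof -
    define L where "L = (\<Sum>i\<in>I. if t = - x i then pole_coeff p a x I i else 0)"
    obtain j where "j \<in> I" "t = x j \<or> t = - x j"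
      using \<open>t \<in> T\<close> by (auto simp: T_def)
    then have "((\<lambda>z. (z - t) * J_ext (fhom p) a x I z
        - ((z - t) * E + (\<Sum>i\<in>I. pole_coeff p a x I i * ((z - t) / (z + x i)))))
        \<longlongrightarrow> L - ((t - t) * E + L)) (at t)"
      unfolding L_def using assms(1,2)
      by (intro tendsto_diff tendsto_add tendsto_mult_J_ext_fhom tendsto_sum_partial_fractions tendsto_intros)
    moreover have "(z - t) * G z = (z - t) * J_ext (fhom p) a x I z
        - ((z - t) * E + (\<Sum>i\<in>I. pole_coeff p a x I i * ((z - t) / (z + x i))))" for z
      unfolding G_def right_diff_distrib distrib_left sum_distrib_left by (simp add: mult_ac)
    ultimately show ?thesis
      by simp
  qed
  moreover have "z \<notin> T"
    using assms(3) by (force simp: T_def)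
  ultimately have "G z = 0"
    using assms(1) by (intro Liouville_removable_poles_0[of T G]) (auto simp: T_def)
  then show ?thesis
    by (simp add: G_def E_def)
qed

lemma generic_iff: "generic xs \<longleftrightarrow> distinct xs \<and> (\<forall>x\<in>set xs. - x \<notin> set xs)"
proof
  assume g: "generic xs"
  then have "distinct xs"
    unfolding generic_def distinct_conv_nth by blast
  moreover have "- x \<notin> set xs" if "x \<in> set xs" for x
  proof
    assume "- x \<in> set xs"
    with that obtain i j where ij: "i < length xs" "j < length xs" "xs ! i = x" "xs ! j = - x"
      by (auto simp: in_set_conv_nth)
    show False
    proof (cases "i = j")
      case True
      with ij have "x + x = 0"
        by (simp add: eq_neg_iff_add_eq_0)
      with ij g show False
        unfolding generic_def by simp
    next
      case False
      with ij g show False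
        unfolding generic_def by (metis minus_minus)
    qed
  qed
  ultimately show "distinct xs \<and> (\<forall>x\<in>set xs. - x \<notin> set xs)"
    by blast
next
  assume xs: "distinct xs \<and> (\<forall>x\<in>set xs. - x \<notin> set xs)"
  show "generic xs"
    unfolding generic_def
  proof (intro allI impI conjI)
    fix i j assume i: "i < length xs"
    then show "xs ! i \<noteq> 0"
      using xs nth_mem by fastforce
    assume "j < length xs" "i \<noteq> j"
    with i xs show "xs ! i \<noteq> xs ! j" "xs ! i \<noteq> - xs ! j"
      by (auto simp: distinct_conv_nth dest: nth_mem)
  qed
qed

lemma generic_iff_generic_on: "generic xs \<longleftrightarrow> generic_on (nth xs) {0..<length xs}"
  unfolding generic_def generic_on_def by (auto simp: power2_eq_iff)

lemma generic_appendD: "generic (xs @ [x]) \<Longrightarrow> generic xs"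
  unfolding generic_iff by auto

lemma remove_at_map: "remove_at i (map f xs) = map f (remove_at i xs)"
  by (simp add: remove_at_def take_map drop_map)

lemma remove_at_upt: "i < n \<Longrightarrow> remove_at i [0..<n] = [0..<i] @ [Suc i..<n]"
  by (simp add: remove_at_def)

lemma generic_remove_at: "generic xs \<Longrightarrow> i < length xs \<Longrightarrow> generic (remove_at i xs)"
  unfolding generic_iff remove_at_def
  by (auto simp: set_take_disj_set_drop_if_distinct dest: in_set_takeD in_set_dropD)

lemma Jsum_eq_J_on: "Jsum p a xs = J_on (\<lambda>u v. ff p (u / v)) a (nth xs) {0..<length xs}"
  by (simp add: Jsum_def J_on_def phase_def cross_prod_def)

lemma Jsum_map_nth:
  assumes "distinct ks"
  shows "Jsum p a (map f ks) = J_on (\<lambda>u v. ff p (u / v)) a f (set ks)"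
proof -
  have "Jsum p a (map f ks) = J_on (\<lambda>u v. ff p (u / v)) a (f \<circ> nth ks) {0..<length ks}"
    unfolding Jsum_eq_J_on length_map by (rule J_on_cong) simp
  also have "\<dots> = J_on (\<lambda>u v. ff p (u / v)) a f (nth ks ` {0..<length ks})"
    using assms by (intro J_on_reindex) (simp add: inj_on_nth)
  finally show ?thesis
    by (simp add: nth_image)
qed

lemma J_on_ff_eq_fhom:
  assumes "\<And>i. i \<in> I \<Longrightarrow> x i \<noteq> 0"
  shows "J_on (\<lambda>u v. ff p (u / v)) a x I = J_on (fhom p) a x I"
  using assms by (intro J_on_cong) (simp add: ff_divide_eq_fhom)

lemma Jsum_remove_at:
  assumes "generic xs" "i < length xs"
  shows "Jsum p a (remove_at i xs) = J_on (fhom p) a (nth xs) ({0..<length xs} - {i})"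
proof -
  have "remove_at i xs = map (nth xs) (remove_at i [0..<length xs])"
    by (simp add: remove_at_map[symmetric] map_nth)
  moreover have "distinct (remove_at i [0..<length xs])" "set (remove_at i [0..<length xs]) = {0..<length xs} - {i}"
    using assms(2) by (auto simp: remove_at_upt)
  ultimately have "Jsum p a (remove_at i xs) = J_on (\<lambda>u v. ff p (u / v)) a (nth xs) ({0..<length xs} - {i})"
    by (simp add: Jsum_map_nth)
  also have "\<dots> = J_on (fhom p) a (nth xs) ({0..<length xs} - {i})"
    using assms(1) by (intro J_on_ff_eq_fhom) (simp add: generic_def)
  finally show ?thesis .
qed

lemma Jsum_append_eq_J_ext:
  assumes "generic (xs @ [x])"
  shows "Jsum p a (xs @ [x]) = J_ext (fhom p) a (nth xs) {0..<length xs} x"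
proof -
  have "Jsum p a (xs @ [x]) = J_on (fhom p) a (nth (xs @ [x])) (insert (length xs) {0..<length xs})"
    using assms unfolding Jsum_eq_J_on
    by (auto intro!: J_on_ff_eq_fhom simp: generic_def atLeast0_lessThan_Suc simp del: upt_Suc)
  also have "\<dots> = J_ext (fhom p) a (nth (xs @ [x])) {0..<length xs} x"
    by (simp add: J_on_insert)
  also have "\<dots> = J_ext (fhom p) a (nth xs) {0..<length xs} x"
    by (rule J_ext_cong) (simp add: nth_append)
  finally show ?thesis .
qed

lemma pole_coeff_eq_RR:
  assumes "generic xs" "i < length xs"
  shows "pole_coeff p a (nth xs) {0..<length xs} i = xs ! i * RR p (Jsum p a) xs i"
proof -
  let ?I = "{0..<length xs} - {i}"
  have "(\<Prod>j\<in>?I. ff p (xs ! i / xs ! j)) = (\<Prod>j\<in>?I. fhom p (xs ! i) (xs ! j))"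
    "(\<Prod>j\<in>?I. ff p (xs ! j / xs ! i)) = (\<Prod>j\<in>?I. fhom p (xs ! j) (xs ! i))"
    using assms by (auto intro!: prod.cong simp: generic_def ff_divide_eq_fhom)
  then show ?thesis
    unfolding pole_coeff_def RR_def Jsum_remove_at[OF assms] by simp
qed

lemma Jsum_rec:
  assumes "generic (xs @ [x])"
  shows "Jsum p a (xs @ [x]) = 2 * cos (of_real pi * a) * Jsum p a xs
    + (\<Sum>i<length xs. xs ! i * RR p (Jsum p a) xs i / (x + xs ! i))"
proof -
  have gen: "generic xs"
    using assms by (rule generic_appendD)
  have "x\<^sup>2 \<noteq> (xs ! i)\<^sup>2" if "i < length xs" for i
    using assms nth_mem[OF that] unfolding generic_iff by (auto simp: power2_eq_iff)
  with gen have "Jsum p a (xs @ [x]) = 2 * cos (of_real pi * a) * J_on (fhom p) a (nth xs) {0..<length xs}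
    + (\<Sum>i\<in>{0..<length xs}. pole_coeff p a (nth xs) {0..<length xs} i / (x + xs ! i))"
    unfolding Jsum_append_eq_J_ext[OF assms] generic_iff_generic_on
    by (intro J_ext_partial_fractions) auto
  also have "\<dots> = 2 * cos (of_real pi * a) * Jsum p a xs
    + (\<Sum>i<length xs. xs ! i * RR p (Jsum p a) xs i / (x + xs ! i))"
  proof -
    have "Jsum p a xs = J_on (fhom p) a (nth xs) {0..<length xs}"
      unfolding Jsum_eq_J_on using gen by (intro J_on_ff_eq_fhom) (simp add: generic_def)
    moreover have "(\<Sum>i\<in>{0..<length xs}. pole_coeff p a (nth xs) {0..<length xs} i / (x + xs ! i))
        = (\<Sum>i<length xs. xs ! i * RR p (Jsum p a) xs i / (x + xs ! i))"
      unfolding lessThan_atLeast0 using gen by (auto simp: pole_coeff_eq_RR intro!: sum.cong)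
    ultimately show ?thesis
      by simp
  qed
  finally show ?thesis .
qed

lemma Jsum_Nil: "Jsum p a [] = 1"
  by (simp add: Jsum_def)

lemma Jsum_singleton: "Jsum p a [x] = 2 * cos (of_real pi * a)"
proof -
  have "Jsum p a [x] = J_on (\<lambda>u v. ff p (u / v)) a (nth [x]) (insert 0 {})"
    by (simp add: Jsum_eq_J_on)
  also have "\<dots> = phase a (Suc 0) 0 + phase a 0 (Suc 0)"
    by (simp add: J_on_insert J_ext_def cross_prod_def)
  also have "\<dots> = 2 * cos (of_real pi * a)"
    using phase_Suc_add_phase_Suc[of a 0 0] by (simp add: phase_def)
  finally show ?thesis .
qed

lemma satisfies_rec_Jsum: "satisfies_rec p a (Jsum p a)"
  unfolding satisfies_rec_def using Jsum_Nil Jsum_singleton Jsum_rec by blast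

lemma satisfies_rec_imp_eq_Jsum:
  assumes "satisfies_rec p a J" "generic xs"
  shows "J xs = Jsum p a xs"
  using assms(2)
proof (induction "length xs" arbitrary: xs rule: less_induct)
  case less
  show ?case
  proof (cases xs rule: rev_exhaust)
    case Nil
    with assms(1) show ?thesis
      by (simp add: satisfies_rec_def Jsum_Nil)
  next
    case (snoc ys x)
    show ?thesis
    proof (cases "ys = []")
      case True
      with assms(1) snoc show ?thesis
        by (simp add: satisfies_rec_def Jsum_singleton)
    next
      case False
      have gen: "generic (ys @ [x])"
        using less.prems snoc by simp
      have "J ys = Jsum p a ys"
        using less.hyps[of ys] generic_appendD[OF gen] snoc by simp
      moreover have "RR p J ys i = RR p (Jsum p a) ys i" if "i < length ys" for i
        using less.hyps[of "remove_at i ys"] generic_remove_at[OF generic_appendD[OF gen] that] that snoc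
        by (simp add: RR_def remove_at_def)
      moreover have "J (ys @ [x]) = 2 * cos (of_real pi * a) * J ys
          + (\<Sum>i<length ys. ys ! i * RR p J ys i / (x + ys ! i))"
        using assms(1) False gen unfolding satisfies_rec_def by (simp add: Suc_le_eq)
      ultimately show ?thesis
        using snoc Jsum_rec[OF gen] by simp
    qed
  qed
qed

lemma Jsum_mset_eq:
  assumes "mset ys = mset xs"
  shows "Jsum p a ys = Jsum p a xs"
proof -
  obtain q where q: "q permutes {..<length xs}" "permute_list q xs = ys"
    using mset_eq_permutation[OF assms] by blast
  have "ys = map (nth xs) (map q [0..<length xs])" "xs = map (nth xs) [0..<length xs]"
    using q(2) by (auto simp: permute_list_def map_nth)
  moreover have "distinct (map q [0..<length xs])" "set (map q [0..<length xs]) = set [0..<length xs]"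
    using permutes_inj_on[OF q(1)] permutes_image[OF q(1)]
    by (simp_all add: distinct_map lessThan_atLeast0)
  ultimately show ?thesis
    by (metis Jsum_map_nth distinct_upt)
qed

lemma Jsum_scale:
  assumes "c \<noteq> 0"
  shows "Jsum p a (map (\<lambda>x. c * x) xs) = Jsum p a xs"
  unfolding Jsum_def length_map
  using assms by (intro sum.cong refl arg_cong2[where f="(*)"] prod.cong) auto

theorem theorem4:
  fixes p :: real and a :: complex
  assumes "p \<in> {-1<..<0} \<union> {0<..<1}"
  shows "satisfies_rec p a (Jsum p a)
    \<and> (\<forall>J. satisfies_rec p a J \<longrightarrow> (\<forall>xs. generic xs \<longrightarrow> J xs = Jsum p a xs))
    \<and> (\<forall>xs ys. generic xs \<longrightarrow> mset ys = mset xs \<longrightarrow> Jsum p a ys = Jsum p a xs)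
    \<and> (\<forall>xs (c::complex). generic xs \<longrightarrow> c \<noteq> 0 \<longrightarrow>
          Jsum p a (map (\<lambda>x. c * x) xs) = Jsum p a xs)"
  using satisfies_rec_Jsum satisfies_rec_imp_eq_Jsum Jsum_mset_eq Jsum_scale by blast

end
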